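(* Assume (C1) and (C2). For any $u\in\mathcal{M}$, $$I(u)=\max_{s,t\ge0}I(su^++tu^-).$$
   Context: Fix real numbers $p,q,r$ with $1<p<q$, $\frac p2$ a positive integer, and $r\ge1$, and functions $a,b,c:\mathbb{Z}\to(0,+\infty)$. Conditions: - (C1) There is $b_0>0$ with $b(n)\ge b_0$ for all $n$ and $b(n)\to+\infty$ as $|n|\to\infty$. - (C2) There is $c_0>0$ with $c(n)\le c_0$ for all $n$ and $\sum_n c(n)<+\infty$. Notation for a real sequence $u=(u(n))_{n\in\mathbb{Z}}$: $\Delta u(n)=u(n+1)-u(n)$, $u^+(n)=\max\{u(n),0\}$, $u^-(n)=\min\{u(n),0\}$. Spaces: - $E$ is the set of real sequences $u$ with $\|u\|:=\big(\sum_n[a(n)|\Delta u(n)|^p+b(n)|u(n)|^p]\big)^{1/p}<\infty$. - $\mathcal{D}=\{u\in E:\sum_n c(n)|u(n)|^q\ln|u(n)|^r<+\infty\}$, where terms with $u(n)=0$ are read as $0$. For $u,v\in\mathcal{D}$: - $I(u)=\frac1p\|u\|^p+\frac{r}{q^2}\sum_n c(n)|u(n)|^q-\frac1q\sum_n c(n)|u(n)|^q\ln|u(n)|^r$. - $\langle I'(u),v\rangle=\sum_n[a(n)|\Delta u(n)|^{p-2}\Delta u(n)\Delta v(n)+b(n)|u(n)|^{p-2}u(n)v(n)]-\sum_n c(n)|u(n)|^{q-2}u(n)v(n)\ln|u(n)|^r$. $\mathcal{M}=\{u\in\mathcal{D}:u^+\ne0,\ u^-\neq0,\ \langle I'(u),u^+\rangle=0,\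 \langle I'(u),u^-\rangle=0\}$. *)

theory Defs
  imports "HOL-Analysis.Analysis"
begin

definition fdiff :: "(int \<Rightarrow> real) \<Rightarrow> int \<Rightarrow> real" where
  "fdiff u n = u (n + 1) - u n"

definition pos_part :: "(int \<Rightarrow> real) \<Rightarrow> int \<Rightarrow> real" where
  "pos_part u n = max (u n) 0"

definition neg_part :: "(int \<Rightarrow> real) \<Rightarrow> int \<Rightarrow> real" where
  "neg_part u n = min (u n) 0"

definition E_term :: "real \<Rightarrow> (int \<Rightarrow> real) \<Rightarrow> (int \<Rightarrow> real) \<Rightarrow> (int \<Rightarrow> real) \<Rightarrow> int \<Rightarrow> real" where
  "E_term p a b u n = a n * \<bar>fdiff u n\<bar> powr p + b n * \<bar>u n\<bar> powr p"

definition spaceE :: "real \<Rightarrow> (int \<Rightarrow> real) \<Rightarrow> (int \<Rightarrow> real) \<Rightarrow> (int \<Rightarrow> real) set" where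
  "spaceE p a b = {u. E_term p a b u summable_on UNIV}"

definition normE :: "real \<Rightarrow> (int \<Rightarrow> real) \<Rightarrow> (int \<Rightarrow> real) \<Rightarrow> (int \<Rightarrow> real) \<Rightarrow> real" where
  "normE p a b u = (\<Sum>\<^sub>\<infinity>n. E_term p a b u n) powr (1 / p)"

text \<open>Logarithmic term c(n) |u(n)|^q ln |u(n)|^r (equals 0 when u(n) = 0, since ln 0 = 0 in Isabelle).\<close>
definition log_term :: "real \<Rightarrow> real \<Rightarrow> (int \<Rightarrow> real) \<Rightarrow> (int \<Rightarrow> real) \<Rightarrow> int \<Rightarrow> real" where
  "log_term q r c u n = c n * \<bar>u n\<bar> powr q * ln (\<bar>u n\<bar> powr r)"

definition spaceD :: "real \<Rightarrow> real \<Rightarrow> real \<Rightarrow> (int \<Rightarrow> real) \<Rightarrow> (int \<Rightarrow> real) \<Rightarrow> (int \<Rightarrow> real) \<Rightarrow> (int \<Rightarrow> real) set" where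
  "spaceD p q r a b c = {u \<in> spaceE p a b. log_term q r c u summable_on UNIV}"

definition functional_I :: "real \<Rightarrow> real \<Rightarrow> real \<Rightarrow> (int \<Rightarrow> real) \<Rightarrow> (int \<Rightarrow> real) \<Rightarrow> (int \<Rightarrow> real) \<Rightarrow> (int \<Rightarrow> real) \<Rightarrow> real" where
  "functional_I p q r a b c u =
     (1 / p) * normE p a b u powr p
     + (r / q\<^sup>2) * (\<Sum>\<^sub>\<infinity>n. c n * \<bar>u n\<bar> powr q)
     - (1 / q) * (\<Sum>\<^sub>\<infinity>n. log_term q r c u n)"

definition deriv_I :: "real \<Rightarrow> real \<Rightarrow> real \<Rightarrow> (int \<Rightarrow> real) \<Rightarrow> (int \<Rightarrow> real) \<Rightarrow> (int \<Rightarrow> real) \<Rightarrow> (int \<Rightarrow> real) \<Rightarrow> (int \<Rightarrow> real) \<Rightarrow> real" where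
  "deriv_I p q r a b c u v =
     (\<Sum>\<^sub>\<infinity>n. a n * \<bar>fdiff u n\<bar> powr (p - 2) * fdiff u n * fdiff v n
              + b n * \<bar>u n\<bar> powr (p - 2) * u n * v n)
     - (\<Sum>\<^sub>\<infinity>n. c n * \<bar>u n\<bar> powr (q - 2) * u n * v n * ln (\<bar>u n\<bar> powr r))"

definition nehari_M :: "real \<Rightarrow> real \<Rightarrow> real \<Rightarrow> (int \<Rightarrow> real) \<Rightarrow> (int \<Rightarrow> real) \<Rightarrow> (int \<Rightarrow> real) \<Rightarrow> (int \<Rightarrow> real) set" where
  "nehari_M p q r a b c = {u \<in> spaceD p q r a b c.
      pos_part u \<noteq> (\<lambda>_. 0) \<and> neg_part u \<noteq> (\<lambda>_. 0) \<and>
      deriv_I p q r a b c u (pos_part u) = 0 \<and>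
      deriv_I p q r a b c u (neg_part u) = 0}"

end

theory Submission
  imports Defs
begin

text \<open>
  Write \<open>w = s u\<^sup>+ + t u\<^sup>-\<close>. For every \<open>u\<close> in the domain of \<open>I\<close>,
  \<open>I(u) - I(w) \<ge> (1 - s\<^sup>q)/q \<langle>I'(u), u\<^sup>+\<rangle> + (1 - t\<^sup>q)/q \<langle>I'(u), u\<^sup>-\<rangle>\<close>,
  and this holds already summand by summand. Since \<open>u\<^sup>+(n) u\<^sup>-(n) = 0\<close> and the increments
  of \<open>u\<^sup>+\<close> and \<open>u\<^sup>-\<close> have the same sign, the gradient and potential summands reduce,
  after normalising to \<open>X + Y = 1\<close>, to the convexity of \<open>x\<^sup>p\<close> combined with the
  monotonicity of \<open>p \<mapsto> (x\<^sup>p - 1)/p\<close> (Young's inequality); the logarithmic summand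
  reduces to \<open>\<tau> - 1 \<le> \<tau> ln \<tau>\<close> for \<open>\<tau> = \<sigma>\<^sup>q\<close>. On the Nehari set both derivative
  terms vanish, so \<open>I(w) \<le> I(u) = I(u\<^sup>+ + u\<^sup>-)\<close>.
\<close>

lemma powr_minus_one_le_powr_ln:
  fixes q s :: real
  assumes "q > 0" "s \<ge> 0"
  shows "s powr q - 1 \<le> q * s powr q * ln s"
proof (cases "s = 0")
  case False
  define \<tau> where "\<tau> = s powr q"
  have "\<tau> > 0" using assms False by (simp add: \<tau>_def)
  have "ln (1 / \<tau>) \<le> 1 / \<tau> - 1" using \<open>\<tau> > 0\<close> by (intro ln_le_minus_one) simp
  then have "\<tau> * (- ln \<tau>) \<le> \<tau> * (1 / \<tau> - 1)"
    using \<open>\<tau> > 0\<close> by (intro mult_left_mono) (auto simp: ln_div)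
  then have "\<tau> - 1 \<le> \<tau> * ln \<tau>" using \<open>\<tau> > 0\<close> by (simp add: algebra_simps)
  moreover have "ln \<tau> = q * ln s" using assms False by (simp add: \<tau>_def ln_powr)
  ultimately show ?thesis by (simp add: \<tau>_def mult_ac)
qed simp

lemma powr_minus_one_div_mono:
  fixes p q s :: real
  assumes "0 < p" "p < q" "s \<ge> 0"
  shows "(s powr p - 1) / p \<le> (s powr q - 1) / q"
proof -
  have "s powr p * 1 \<le> (s powr p) powr (q / p) / (q / p) + 1 powr (q / (q - p)) / (q / (q - p))"
    using assms by (intro Youngs_inequality) (auto simp: field_simps)
  also have "(s powr p) powr (q / p) = s powr q" using assms by (simp add: powr_powr)
  finally have "s powr p \<le> s powr q * (p / q) + (q - p) / q" using assms by simp
  then have "q * s powr p \<le> q * (s powr q * (p / q) + (q - p) / q)"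
    using assms by (intro mult_left_mono) auto
  also have "\<dots> = p * s powr q + q - p" using assms by (simp add: field_simps)
  finally have "q * (s powr p - 1) \<le> p * (s powr q - 1)" by (simp add: algebra_simps)
  then show ?thesis using assms by (simp add: field_simps)
qed

lemma powr_convex_combination:
  fixes p l s t :: real
  assumes "p \<ge> 1" "0 \<le> l" "l \<le> 1" "s \<ge> 0" "t \<ge> 0"
  shows "(l * s + (1 - l) * t) powr p \<le> l * s powr p + (1 - l) * t powr p"
proof -
  have powr_le_self: "z powr p \<le> z" if "0 \<le> z" "z \<le> 1" for z :: real
  proof (cases "z = 0")
    case False
    then have "z powr p \<le> z powr 1" using that assms by (intro powr_mono') auto
    then show ?thesis using that by simp
  qed simp
  consider "s = 0" | "t = 0" | "s > 0" "t > 0" using assms by linarith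
  then show ?thesis
  proof cases
    case 1
    have "((1 - l) * t) powr p = (1 - l) powr p * t powr p" using assms by (simp add: powr_mult)
    also have "\<dots> \<le> (1 - l) * t powr p" using assms powr_le_self[of "1 - l"] by (intro mult_right_mono) auto
    finally show ?thesis using 1 by simp
  next
    case 2
    have "(l * s) powr p = l powr p * s powr p" using assms by (simp add: powr_mult)
    also have "\<dots> \<le> l * s powr p" using assms powr_le_self[of l] by (intro mult_right_mono) auto
    finally show ?thesis using 2 by simp
  next
    case 3
    from convex_onD[OF powr_convex[OF assms(1)], of "1 - l" s t] 3 assms
    show ?thesis by (simp add: algebra_simps)
  qed
qed

lemma abs_powr_minus_two_mult_self:
  fixes x q :: real
  assumes "x \<noteq> 0"
  shows "\<bar>x\<bar> powr (q - 2) * x * x = \<bar>x\<bar> powr q"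
proof -
  have "\<bar>x\<bar> powr (q - 2) = \<bar>x\<bar> powr q / \<bar>x\<bar> powr 2" by (simp add: powr_diff)
  moreover have "\<bar>x\<bar> powr 2 = x * x"
    using assms by (simp add: powr_realpow[of "\<bar>x\<bar>" 2, simplified] power2_eq_square)
  ultimately show ?thesis using assms by simp
qed

lemma abs_powr_minus_two_mult_le:
  fixes z x p :: real
  assumes "\<bar>x\<bar> \<le> \<bar>z\<bar>"
  shows "\<bar>\<bar>z\<bar> powr (p - 2) * z * x\<bar> \<le> \<bar>z\<bar> powr p"
proof (cases "z = 0")
  case False
  have "\<bar>\<bar>z\<bar> powr (p - 2) * z * x\<bar> = \<bar>z\<bar> powr (p - 2) * \<bar>z\<bar> * \<bar>x\<bar>" by (simp add: abs_mult)
  also have "\<dots> \<le> \<bar>z\<bar> powr (p - 2) * \<bar>z\<bar> * \<bar>z\<bar>" using assms by (intro mult_left_mono) auto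
  also have "\<dots> = \<bar>z\<bar> powr p" using abs_powr_minus_two_mult_self[of "\<bar>z\<bar>" p] False by simp
  finally show ?thesis .
qed (use assms in simp)

lemma powr_rescale_ineq_nonneg:
  fixes p q s t X Y :: real
  assumes "1 \<le> p" "p < q" "s \<ge> 0" "t \<ge> 0" "X \<ge> 0" "Y \<ge> 0"
  shows "(X + Y) powr (p - 2) * (X + Y) * ((1 - s powr q) / q * X + (1 - t powr q) / q * Y)
           \<le> (X + Y) powr p / p - (s * X + t * Y) powr p / p"
proof (cases "X + Y = 0")
  case True
  then have "X = 0" "Y = 0" using assms by auto
  then show ?thesis by simp
next
  case False
  define Z where "Z = X + Y"
  define l where "l = X / Z"
  have "Z > 0" using False assms by (simp add: Z_def)
  have X: "X = l * Z" and Y: "Y = (1 - l) * Z" using \<open>Z > 0\<close> by (auto simp: l_def Z_def field_simps)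
  have "0 \<le> l" "l \<le> 1" using assms \<open>Z > 0\<close> by (auto simp: l_def Z_def)
  have "p > 0" using assms by simp
  have normalized: "l * ((1 - s powr q) / q) + (1 - l) * ((1 - t powr q) / q)
                      \<le> 1 / p - (l * s + (1 - l) * t) powr p / p"
  proof -
    have "l * ((1 - s powr q) / q) + (1 - l) * ((1 - t powr q) / q)
            \<le> l * ((1 - s powr p) / p) + (1 - l) * ((1 - t powr p) / p)"
      using powr_minus_one_div_mono[of p q s] powr_minus_one_div_mono[of p q t]
        assms \<open>p > 0\<close> \<open>0 \<le> l\<close> \<open>l \<le> 1\<close>
      by (intro add_mono mult_left_mono) (auto simp: diff_divide_distrib)
    also have "\<dots> = 1 / p - (l * s powr p + (1 - l) * t powr p) / p"
      using \<open>p > 0\<close> by (simp add: field_simps)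
    also have "\<dots> \<le> 1 / p - (l * s + (1 - l) * t) powr p / p"
      using powr_convex_combination[of p l s t] assms \<open>0 \<le> l\<close> \<open>l \<le> 1\<close>
      by (intro diff_left_mono divide_right_mono) auto
    finally show ?thesis .
  qed
  have split: "(1 - s powr q) / q * X + (1 - t powr q) / q * Y
                 = Z * (l * ((1 - s powr q) / q) + (1 - l) * ((1 - t powr q) / q))"
    by (simp add: X Y algebra_simps)
  have rescaled: "s * X + t * Y = Z * (l * s + (1 - l) * t)" by (simp add: X Y algebra_simps)
  have "(X + Y) powr (p - 2) * (X + Y) * ((1 - s powr q) / q * X + (1 - t powr q) / q * Y)
          = Z powr (p - 2) * Z * Z * (l * ((1 - s powr q) / q) + (1 - l) * ((1 - t powr q) / q))"
    unfolding split Z_def [symmetric] by (simp only: mult.assoc)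
  also have "\<dots> = Z powr p * (l * ((1 - s powr q) / q) + (1 - l) * ((1 - t powr q) / q))"
    using abs_powr_minus_two_mult_self[of Z p] \<open>Z > 0\<close> by simp
  also have "\<dots> \<le> Z powr p * (1 / p - (l * s + (1 - l) * t) powr p / p)"
    using normalized by (intro mult_left_mono) auto
  also have "\<dots> = (X + Y) powr p / p - (s * X + t * Y) powr p / p"
    unfolding rescaled Z_def [symmetric]
    using \<open>Z > 0\<close> \<open>0 \<le> l\<close> \<open>l \<le> 1\<close> assms by (simp add: powr_mult right_diff_distrib)
  finally show ?thesis .
qed

lemma abs_powr_rescale_ineq:
  fixes p q s t X Y :: real
  assumes "1 \<le> p" "p < q" "s \<ge> 0" "t \<ge> 0" "X * Y \<ge> 0"
  shows "\<bar>X + Y\<bar> powr (p - 2) * (X + Y) * ((1 - s powr q) / q * X + (1 - t powr q) / q * Y)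
           \<le> \<bar>X + Y\<bar> powr p / p - \<bar>s * X + t * Y\<bar> powr p / p"
proof (cases "X \<ge> 0 \<and> Y \<ge> 0")
  case True
  then show ?thesis using powr_rescale_ineq_nonneg[of p q s t X Y] assms by simp
next
  case False
  then have "X \<le> 0" "Y \<le> 0" using assms by (auto simp: zero_le_mult_iff)
  moreover have "s * X \<le> 0" "t * Y \<le> 0"
    using assms \<open>X \<le> 0\<close> \<open>Y \<le> 0\<close> by (auto simp: mult_nonneg_nonpos)
  ultimately have "\<bar>X + Y\<bar> = - X + - Y" "\<bar>s * X + t * Y\<bar> = s * - X + t * - Y"
    by auto
  moreover have "(X + Y) * ((1 - s powr q) / q * X + (1 - t powr q) / q * Y)
      = (- X + - Y) * ((1 - s powr q) / q * - X + (1 - t powr q) / q * - Y)"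
    by (simp add: algebra_simps)
  ultimately show ?thesis
    using powr_rescale_ineq_nonneg[of p q s t "- X" "- Y"] assms \<open>X \<le> 0\<close> \<open>Y \<le> 0\<close>
    by (simp add: mult.assoc)
qed

definition log_energy :: "real \<Rightarrow> real \<Rightarrow> real \<Rightarrow> real" where
  "log_energy q r x = r / q\<^sup>2 * \<bar>x\<bar> powr q - \<bar>x\<bar> powr q * ln (\<bar>x\<bar> powr r) / q"

lemma log_energy_rescale_ineq:
  fixes q r x \<sigma> :: real
  assumes "q > 0" "r \<ge> 0" "\<sigma> \<ge> 0"
  shows "- ((1 - \<sigma> powr q) / q * (\<bar>x\<bar> powr q * ln (\<bar>x\<bar> powr r)))
           \<le> log_energy q r x - log_energy q r (\<sigma> * x)"
proof (cases "\<sigma> = 0 \<or> x = 0")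
  case True
  then show ?thesis using assms by (auto simp: log_energy_def)
next
  case False
  then have "\<sigma> > 0" using assms by simp
  have "\<bar>\<sigma> * x\<bar> powr q = \<sigma> powr q * \<bar>x\<bar> powr q"
    using \<open>\<sigma> > 0\<close> by (simp add: abs_mult powr_mult)
  moreover have "ln \<bar>\<sigma> * x\<bar> = ln \<sigma> + ln \<bar>x\<bar>"
    using \<open>\<sigma> > 0\<close> False by (simp add: abs_mult ln_mult)
  ultimately have identity: "log_energy q r x - log_energy q r (\<sigma> * x)
        + (1 - \<sigma> powr q) / q * (\<bar>x\<bar> powr q * ln (\<bar>x\<bar> powr r))
      = r / q\<^sup>2 * \<bar>x\<bar> powr q * (1 - \<sigma> powr q + q * \<sigma> powr q * ln \<sigma>)"
    using assms by (simp add: log_energy_def field_simps power2_eq_square)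
  have "0 \<le> 1 - \<sigma> powr q + q * \<sigma> powr q * ln \<sigma>"
    using powr_minus_one_le_powr_ln[of q \<sigma>] assms by simp
  then have "0 \<le> r / q\<^sup>2 * \<bar>x\<bar> powr q * (1 - \<sigma> powr q + q * \<sigma> powr q * ln \<sigma>)"
    using assms by simp
  then show ?thesis using identity by linarith
qed

lemma log_energy_rescale_sign_parts_ineq:
  fixes q r s t x :: real
  assumes "q > 0" "r \<ge> 0" "s \<ge> 0" "t \<ge> 0"
  shows "- ((1 - s powr q) / q * (\<bar>x\<bar> powr (q - 2) * x * max x 0 * ln (\<bar>x\<bar> powr r))
            + (1 - t powr q) / q * (\<bar>x\<bar> powr (q - 2) * x * min x 0 * ln (\<bar>x\<bar> powr r)))
           \<le> log_energy q r x - log_energy q r (s * max x 0 + t * min x 0)"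
proof -
  consider "x > 0" | "x < 0" | "x = 0" by linarith
  then show ?thesis
  proof cases
    case 1
    then show ?thesis
      using log_energy_rescale_ineq[of q r s x] abs_powr_minus_two_mult_self[of x q] assms
      by (simp add: mult.assoc)
  next
    case 2
    then show ?thesis
      using log_energy_rescale_ineq[of q r t x] abs_powr_minus_two_mult_self[of x q] assms
      by (simp add: mult.assoc)
  qed (use assms in \<open>simp add: log_energy_def\<close>)
qed

definition rescale_parts :: "real \<Rightarrow> real \<Rightarrow> (int \<Rightarrow> real) \<Rightarrow> int \<Rightarrow> real" where
  "rescale_parts s t u n = s * pos_part u n + t * neg_part u n"

definition energy_density :: "real \<Rightarrow> real \<Rightarrow> real \<Rightarrow> (int \<Rightarrow> real) \<Rightarrow> (int \<Rightarrow> real) \<Rightarrow> (int \<Rightarrow> real)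
    \<Rightarrow> (int \<Rightarrow> real) \<Rightarrow> int \<Rightarrow> real" where
  "energy_density p q r a b c u n =
     E_term p a b u n / p + r / q\<^sup>2 * (c n * \<bar>u n\<bar> powr q) - log_term q r c u n / q"

definition deriv_density :: "real \<Rightarrow> real \<Rightarrow> real \<Rightarrow> (int \<Rightarrow> real) \<Rightarrow> (int \<Rightarrow> real) \<Rightarrow> (int \<Rightarrow> real)
    \<Rightarrow> (int \<Rightarrow> real) \<Rightarrow> (int \<Rightarrow> real) \<Rightarrow> int \<Rightarrow> real" where
  "deriv_density p q r a b c u v n =
     a n * \<bar>fdiff u n\<bar> powr (p - 2) * fdiff u n * fdiff v n + b n * \<bar>u n\<bar> powr (p - 2) * u n * v n
     - c n * \<bar>u n\<bar> powr (q - 2) * u n * v n * ln (\<bar>u n\<bar> powr r)"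

lemma pos_part_plus_neg_part: "pos_part u n + neg_part u n = u n"
  by (simp add: pos_part_def neg_part_def)

lemma fdiff_parts_mult_nonneg: "fdiff (pos_part u) n * fdiff (neg_part u) n \<ge> 0"
  unfolding fdiff_def pos_part_def neg_part_def
  by (cases "u n \<le> 0"; cases "u (n + 1) \<le> 0")
     (auto simp: zero_le_mult_iff mult_nonneg_nonpos mult_nonpos_nonneg)

lemma fdiff_eq_fdiff_parts: "fdiff u n = fdiff (pos_part u) n + fdiff (neg_part u) n"
  by (auto simp: fdiff_def pos_part_def neg_part_def)

lemma fdiff_rescale_parts:
  "fdiff (rescale_parts s t u) n = s * fdiff (pos_part u) n + t * fdiff (neg_part u) n"
  by (simp add: fdiff_def rescale_parts_def algebra_simps)

lemma abs_rescale_parts_le: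
  assumes "s \<ge> 0" "t \<ge> 0"
  shows "\<bar>rescale_parts s t u n\<bar> \<le> max s t * \<bar>u n\<bar>"
  using assms
  by (cases "u n \<ge> 0") (auto simp: rescale_parts_def pos_part_def neg_part_def abs_mult intro: mult_right_mono)

lemma abs_fdiff_rescale_parts_le:
  assumes "s \<ge> 0" "t \<ge> 0"
  shows "\<bar>fdiff (rescale_parts s t u) n\<bar> \<le> max s t * \<bar>fdiff u n\<bar>"
proof -
  define X Y where "X = fdiff (pos_part u) n" and "Y = fdiff (neg_part u) n"
  have "\<bar>s * X + t * Y\<bar> \<le> s * \<bar>X\<bar> + t * \<bar>Y\<bar>"
    using assms abs_triangle_ineq[of "s * X" "t * Y"] by (simp add: abs_mult)
  also have "\<dots> \<le> max s t * (\<bar>X\<bar> + \<bar>Y\<bar>)"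
    using assms by (simp add: distrib_left add_mono mult_right_mono)
  also have "\<bar>X\<bar> + \<bar>Y\<bar> = \<bar>X + Y\<bar>"
    using fdiff_parts_mult_nonneg[of u n] by (auto simp: X_def Y_def zero_le_mult_iff)
  finally show ?thesis by (simp add: X_def Y_def fdiff_rescale_parts flip: fdiff_eq_fdiff_parts)
qed

lemma log_term_rescale_parts:
  fixes u :: "int \<Rightarrow> real" and n :: int
  assumes "s \<ge> 0" "t \<ge> 0"
  defines "\<sigma> \<equiv> if u n \<ge> 0 then s else t"
  shows "log_term q r c (rescale_parts s t u) n
           = r * \<sigma> powr q * ln \<sigma> * (c n * \<bar>u n\<bar> powr q) + \<sigma> powr q * log_term q r c u n"
proof -
  have w: "rescale_parts s t u n = \<sigma> * u n"
    by (auto simp: \<sigma>_def rescale_parts_def pos_part_def neg_part_def)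
  show ?thesis
  proof (cases "\<sigma> = 0 \<or> u n = 0")
    case False
    then have "\<sigma> > 0" using assms by (auto simp: \<sigma>_def)
    then have "\<bar>\<sigma> * u n\<bar> powr q = \<sigma> powr q * \<bar>u n\<bar> powr q" "ln \<bar>\<sigma> * u n\<bar> = ln \<sigma> + ln \<bar>u n\<bar>"
      using False by (simp_all add: abs_mult powr_mult ln_mult)
    then show ?thesis unfolding log_term_def w using False by (simp add: algebra_simps)
  qed (auto simp: w log_term_def)
qed

lemma deriv_density_parts_le_energy_density_diff:
  assumes "1 \<le> p" "p < q" "r \<ge> 0" "s \<ge> 0" "t \<ge> 0" "a n \<ge> 0" "b n \<ge> 0" "c n \<ge> 0"
  shows "(1 - s powr q) / q * deriv_density p q r a b c u (pos_part u) n
           + (1 - t powr q) / q * deriv_density p q r a b c u (neg_part u) n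
         \<le> energy_density p q r a b c u n - energy_density p q r a b c (rescale_parts s t u) n"
proof -
  define As At where "As = (1 - s powr q) / q" and "At = (1 - t powr q) / q"
  define w where "w = rescale_parts s t u"
  define X Y where "X = fdiff (pos_part u) n" and "Y = fdiff (neg_part u) n"
  have "X * Y \<ge> 0" unfolding X_def Y_def by (rule fdiff_parts_mult_nonneg)
  moreover have "fdiff u n = X + Y" "fdiff w n = s * X + t * Y"
    unfolding X_def Y_def w_def by (rule fdiff_eq_fdiff_parts, rule fdiff_rescale_parts)
  ultimately have gradient:
    "\<bar>fdiff u n\<bar> powr (p - 2) * fdiff u n * (As * X + At * Y)
       \<le> \<bar>fdiff u n\<bar> powr p / p - \<bar>fdiff w n\<bar> powr p / p"
    using abs_powr_rescale_ineq[of p q s t X Y] assms by (simp add: As_def At_def)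
  have "pos_part u n * neg_part u n \<ge> 0" by (simp add: pos_part_def neg_part_def)
  then have potential:
    "\<bar>u n\<bar> powr (p - 2) * u n * (As * pos_part u n + At * neg_part u n)
       \<le> \<bar>u n\<bar> powr p / p - \<bar>w n\<bar> powr p / p"
    using abs_powr_rescale_ineq[of p q s t "pos_part u n" "neg_part u n"] assms
    by (simp add: As_def At_def w_def rescale_parts_def pos_part_plus_neg_part)
  have logarithmic:
    "- (As * (\<bar>u n\<bar> powr (q - 2) * u n * pos_part u n * ln (\<bar>u n\<bar> powr r))
        + At * (\<bar>u n\<bar> powr (q - 2) * u n * neg_part u n * ln (\<bar>u n\<bar> powr r)))
       \<le> log_energy q r (u n) - log_energy q r (w n)"
    using log_energy_rescale_sign_parts_ineq[of q r s t "u n"] assms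
    by (simp add: As_def At_def w_def rescale_parts_def pos_part_def neg_part_def)
  have "a n * (\<bar>fdiff u n\<bar> powr (p - 2) * fdiff u n * (As * X + At * Y))
        + b n * (\<bar>u n\<bar> powr (p - 2) * u n * (As * pos_part u n + At * neg_part u n))
        + c n * - (As * (\<bar>u n\<bar> powr (q - 2) * u n * pos_part u n * ln (\<bar>u n\<bar> powr r))
                    + At * (\<bar>u n\<bar> powr (q - 2) * u n * neg_part u n * ln (\<bar>u n\<bar> powr r)))
      \<le> a n * (\<bar>fdiff u n\<bar> powr p / p - \<bar>fdiff w n\<bar> powr p / p)
        + b n * (\<bar>u n\<bar> powr p / p - \<bar>w n\<bar> powr p / p)
        + c n * (log_energy q r (u n) - log_energy q r (w n))"
    using gradient potential logarithmic assms by (intro add_mono mult_left_mono) auto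
  then show ?thesis
    unfolding energy_density_def deriv_density_def E_term_def log_term_def log_energy_def X_def Y_def
      As_def At_def w_def [symmetric]
    by (simp del: ln_powr add: algebra_simps add_divide_distrib diff_divide_distrib)
qed

lemma has_sum_diff:
  fixes f g :: "'a \<Rightarrow> 'b::topological_ab_group_add"
  assumes "(f has_sum a) A" "(g has_sum b) A"
  shows "((\<lambda>x. f x - g x) has_sum (a - b)) A"
proof -
  have "((\<lambda>x. - g x) has_sum - b) A" using assms(2) by (simp add: has_sum_uminus)
  from has_sum_add[OF assms(1) this] show ?thesis by simp
qed

lemma summable_on_real_comparison:
  fixes f g :: "'a \<Rightarrow> real"
  assumes "f summable_on A" "\<And>x. x \<in> A \<Longrightarrow> \<bar>g x\<bar> \<le> f x"
  shows "g summable_on A"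
proof -
  have "(\<lambda>x. norm (g x)) summable_on A"
    by (rule Infinite_Sum.abs_summable_on_comparison_test'[OF assms(1)]) (simp add: assms(2))
  then show ?thesis using summable_on_iff_abs_summable_on_real by blast
qed

lemma E_term_nonneg: "a n \<ge> 0 \<Longrightarrow> b n \<ge> 0 \<Longrightarrow> E_term p a b u n \<ge> 0"
  by (simp add: E_term_def)

lemma has_sum_energy_density:
  assumes "p > 0" "\<And>n. a n \<ge> 0" "\<And>n. b n \<ge> 0"
    and "E_term p a b u summable_on UNIV" "(\<lambda>n. c n * \<bar>u n\<bar> powr q) summable_on UNIV"
    and "log_term q r c u summable_on UNIV"
  shows "(energy_density p q r a b c u has_sum functional_I p q r a b c u) UNIV"
proof -
  have "infsum (E_term p a b u) UNIV \<ge> 0" using assms by (simp add: infsum_nonneg E_term_nonneg)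
  then have "normE p a b u powr p = infsum (E_term p a b u) UNIV"
    using assms by (simp add: normE_def powr_powr)
  then have E: "((\<lambda>n. E_term p a b u n / p) has_sum (normE p a b u powr p / p)) UNIV"
    using assms(4) by (simp add: has_sum_divide_const)
  have C: "((\<lambda>n. r / q\<^sup>2 * (c n * \<bar>u n\<bar> powr q))
      has_sum (r / q\<^sup>2 * (\<Sum>\<^sub>\<infinity>n. c n * \<bar>u n\<bar> powr q))) UNIV"
    using assms(5) by (intro has_sum_cmult_right has_sum_infsum)
  have L: "((\<lambda>n. log_term q r c u n / q) has_sum ((\<Sum>\<^sub>\<infinity>n. log_term q r c u n) / q)) UNIV"
    using assms(6) by (intro has_sum_divide_const has_sum_infsum)
  have "functional_I p q r a b c u = normE p a b u powr p / p
      + r / q\<^sup>2 * (\<Sum>\<^sub>\<infinity>n. c n * \<bar>u n\<bar> powr q) - (\<Sum>\<^sub>\<infinity>n. log_term q r c u n) / q"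
    by (simp add: functional_I_def)
  moreover have "energy_density p q r a b c u
      = (\<lambda>n. E_term p a b u n / p + r / q\<^sup>2 * (c n * \<bar>u n\<bar> powr q) - log_term q r c u n / q)"
    by (simp add: fun_eq_iff energy_density_def)
  ultimately show ?thesis using has_sum_diff[OF has_sum_add[OF E C] L] by (simp only:)
qed

lemma has_sum_deriv_density:
  assumes "(\<lambda>n. a n * \<bar>fdiff u n\<bar> powr (p - 2) * fdiff u n * fdiff v n
              + b n * \<bar>u n\<bar> powr (p - 2) * u n * v n) summable_on UNIV"
    and "(\<lambda>n. c n * \<bar>u n\<bar> powr (q - 2) * u n * v n * ln (\<bar>u n\<bar> powr r)) summable_on UNIV"
  shows "(deriv_density p q r a b c u v has_sum deriv_I p q r a b c u v) UNIV"
proof -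
  have "deriv_density p q r a b c u v
      = (\<lambda>n. (a n * \<bar>fdiff u n\<bar> powr (p - 2) * fdiff u n * fdiff v n
              + b n * \<bar>u n\<bar> powr (p - 2) * u n * v n)
             - c n * \<bar>u n\<bar> powr (q - 2) * u n * v n * ln (\<bar>u n\<bar> powr r))"
    by (simp add: fun_eq_iff deriv_density_def)
  then show ?thesis
    unfolding deriv_I_def using has_sum_diff[OF has_sum_infsum has_sum_infsum, OF assms] by (simp only:)
qed

lemma has_sum_deriv_density_part:
  assumes "u \<in> spaceD p q r a b c" "\<And>n. a n \<ge> 0" "\<And>n. b n \<ge> 0"
    and "\<And>n. \<bar>fdiff v n\<bar> \<le> \<bar>fdiff u n\<bar>" "\<And>n. \<bar>v n\<bar> \<le> \<bar>u n\<bar>" "\<And>n. v n \<noteq> 0 \<Longrightarrow> v n = u n"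
  shows "(deriv_density p q r a b c u v has_sum deriv_I p q r a b c u v) UNIV"
proof (rule has_sum_deriv_density)
  show "(\<lambda>n. a n * \<bar>fdiff u n\<bar> powr (p - 2) * fdiff u n * fdiff v n
           + b n * \<bar>u n\<bar> powr (p - 2) * u n * v n) summable_on UNIV"
  proof (rule summable_on_real_comparison)
    show "E_term p a b u summable_on UNIV" using assms(1) by (simp add: spaceD_def spaceE_def)
    fix n
    have "\<bar>a n * \<bar>fdiff u n\<bar> powr (p - 2) * fdiff u n * fdiff v n + b n * \<bar>u n\<bar> powr (p - 2) * u n * v n\<bar>
        \<le> a n * \<bar>\<bar>fdiff u n\<bar> powr (p - 2) * fdiff u n * fdiff v n\<bar> + b n * \<bar>\<bar>u n\<bar> powr (p - 2) * u n * v n\<bar>"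
      using assms(2,3)[of n]
        abs_triangle_ineq[of "a n * (\<bar>fdiff u n\<bar> powr (p - 2) * fdiff u n * fdiff v n)"
          "b n * (\<bar>u n\<bar> powr (p - 2) * u n * v n)"]
      by (simp add: abs_mult mult.assoc)
    also have "\<dots> \<le> E_term p a b u n"
      unfolding E_term_def using assms
      by (intro add_mono mult_left_mono abs_powr_minus_two_mult_le) auto
    finally show "\<bar>a n * \<bar>fdiff u n\<bar> powr (p - 2) * fdiff u n * fdiff v n
        + b n * \<bar>u n\<bar> powr (p - 2) * u n * v n\<bar> \<le> E_term p a b u n" .
  qed
  show "(\<lambda>n. c n * \<bar>u n\<bar> powr (q - 2) * u n * v n * ln (\<bar>u n\<bar> powr r)) summable_on UNIV"
  proof (rule summable_on_real_comparison)
    show "(\<lambda>n. \<bar>log_term q r c u n\<bar>) summable_on UNIV"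
      using assms(1) summable_on_iff_abs_summable_on_real by (auto simp: spaceD_def)
    fix n
    show "\<bar>c n * \<bar>u n\<bar> powr (q - 2) * u n * v n * ln (\<bar>u n\<bar> powr r)\<bar> \<le> \<bar>log_term q r c u n\<bar>"
    proof (cases "v n = 0")
      case False
      then have "v n = u n" "u n \<noteq> 0" using assms(6) by auto
      then show ?thesis
        using abs_powr_minus_two_mult_self[of "u n" q]
        by (simp add: log_term_def mult.assoc mult.left_commute)
    qed simp
  qed
qed

lemma spaceE_bounded:
  assumes "u \<in> spaceE p a b" "p > 0" "\<And>n. a n \<ge> 0" "b0 > 0" "\<And>n. b n \<ge> b0"
  shows "\<bar>u n\<bar> \<le> ((\<Sum>\<^sub>\<infinity>m. E_term p a b u m) / b0) powr (1 / p)"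
proof -
  have "b m \<ge> 0" for m using assms(4) assms(5)[of m] by simp
  have "b0 * \<bar>u n\<bar> powr p \<le> b n * \<bar>u n\<bar> powr p"
    using assms by (intro mult_right_mono) auto
  also have "\<dots> \<le> E_term p a b u n" using assms by (simp add: E_term_def)
  also have "\<dots> = (\<Sum>\<^sub>\<infinity>m\<in>{n}. E_term p a b u m)" by simp
  also have "\<dots> \<le> (\<Sum>\<^sub>\<infinity>m. E_term p a b u m)"
    using assms \<open>\<And>m. b m \<ge> 0\<close>
    by (intro infsum_mono_neutral) (auto simp: spaceE_def E_term_nonneg)
  finally have "\<bar>u n\<bar> powr p \<le> (\<Sum>\<^sub>\<infinity>m. E_term p a b u m) / b0"
    using assms by (simp add: field_simps)
  then have "(\<bar>u n\<bar> powr p) powr (1 / p) \<le> ((\<Sum>\<^sub>\<infinity>m. E_term p a b u m) / b0) powr (1 / p)"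
    using assms by (intro powr_mono2) auto
  then show ?thesis using assms by (simp add: powr_powr)
qed

lemma summable_weighted_powr_bounded:
  fixes c f :: "'a \<Rightarrow> real"
  assumes "c summable_on A" "\<And>x. c x \<ge> 0" "q \<ge> 0" "\<And>x. \<bar>f x\<bar> \<le> M"
  shows "(\<lambda>x. c x * \<bar>f x\<bar> powr q) summable_on A"
proof (rule summable_on_real_comparison)
  show "(\<lambda>x. M powr q * c x) summable_on A" using assms(1) by (rule summable_on_cmult_right)
  fix x
  have "\<bar>f x\<bar> powr q \<le> M powr q" using assms by (intro powr_mono2) auto
  then show "\<bar>c x * \<bar>f x\<bar> powr q\<bar> \<le> M powr q * c x"
    using assms(2)[of x] by (simp add: abs_mult mult.commute mult_left_mono)
qed

lemma summable_weighted_powr_dominated: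
  fixes c f g :: "'a \<Rightarrow> real"
  assumes "(\<lambda>x. c x * \<bar>f x\<bar> powr q) summable_on A" "\<And>x. c x \<ge> 0" "q \<ge> 0" "K \<ge> 0"
    and "\<And>x. \<bar>g x\<bar> \<le> K * \<bar>f x\<bar>"
  shows "(\<lambda>x. c x * \<bar>g x\<bar> powr q) summable_on A"
proof (rule summable_on_real_comparison)
  show "(\<lambda>x. K powr q * (c x * \<bar>f x\<bar> powr q)) summable_on A"
    using assms(1) by (rule summable_on_cmult_right)
  fix x
  have "\<bar>g x\<bar> powr q \<le> (K * \<bar>f x\<bar>) powr q" using assms by (intro powr_mono2) auto
  also have "\<dots> = K powr q * \<bar>f x\<bar> powr q" using assms by (simp add: powr_mult)
  finally show "\<bar>c x * \<bar>g x\<bar> powr q\<bar> \<le> K powr q * (c x * \<bar>f x\<bar> powr q)"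
    using assms(2)[of x] by (simp add: abs_mult mult.left_commute mult_left_mono)
qed

lemma summable_E_term_dominated:
  assumes "E_term p a b u summable_on UNIV" "p \<ge> 0" "\<And>n. a n \<ge> 0" "\<And>n. b n \<ge> 0" "K \<ge> 0"
    and "\<And>n. \<bar>fdiff w n\<bar> \<le> K * \<bar>fdiff u n\<bar>" "\<And>n. \<bar>w n\<bar> \<le> K * \<bar>u n\<bar>"
  shows "E_term p a b w summable_on UNIV"
proof -
  have "(\<lambda>n. a n * \<bar>fdiff u n\<bar> powr p) summable_on UNIV"
    using assms(1) by (rule summable_on_comparison_test) (use assms in \<open>auto simp: E_term_def\<close>)
  then have "(\<lambda>n. a n * \<bar>fdiff w n\<bar> powr p) summable_on UNIV"
    by (rule summable_weighted_powr_dominated[OF _ assms(3,2,5,6)])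
  moreover have "(\<lambda>n. b n * \<bar>u n\<bar> powr p) summable_on UNIV"
    using assms(1) by (rule summable_on_comparison_test) (use assms in \<open>auto simp: E_term_def\<close>)
  then have "(\<lambda>n. b n * \<bar>w n\<bar> powr p) summable_on UNIV"
    by (rule summable_weighted_powr_dominated[OF _ assms(4,2,5,7)])
  ultimately show ?thesis unfolding E_term_def by (rule summable_on_add)
qed

lemma summable_log_term_rescale_parts:
  assumes "log_term q r c u summable_on UNIV" "(\<lambda>n. c n * \<bar>u n\<bar> powr q) summable_on UNIV"
    and "\<And>n. c n \<ge> 0" "q \<ge> 0" "s \<ge> 0" "t \<ge> 0"
  shows "log_term q r c (rescale_parts s t u) summable_on UNIV"
proof (rule summable_on_real_comparison)
  define K where "K = \<bar>r * s powr q * ln s\<bar> + \<bar>r * t powr q * ln t\<bar>"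
  show "(\<lambda>n. K * (c n * \<bar>u n\<bar> powr q) + max s t powr q * \<bar>log_term q r c u n\<bar>) summable_on UNIV"
    using assms summable_on_iff_abs_summable_on_real
    by (intro summable_on_add summable_on_cmult_right) auto
  fix n
  define \<sigma> where "\<sigma> = (if u n \<ge> 0 then s else t)"
  have "\<sigma> powr q \<le> max s t powr q" "\<bar>r * \<sigma> powr q * ln \<sigma>\<bar> \<le> K"
    using assms by (auto simp: \<sigma>_def K_def intro: powr_mono2)
  moreover have "c n * \<bar>u n\<bar> powr q \<ge> 0" using assms by simp
  ultimately have "\<bar>r * \<sigma> powr q * ln \<sigma>\<bar> * (c n * \<bar>u n\<bar> powr q) + \<sigma> powr q * \<bar>log_term q r c u n\<bar>
      \<le> K * (c n * \<bar>u n\<bar> powr q) + max s t powr q * \<bar>log_term q r c u n\<bar>"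
    by (intro add_mono mult_right_mono) auto
  then show "\<bar>log_term q r c (rescale_parts s t u) n\<bar>
      \<le> K * (c n * \<bar>u n\<bar> powr q) + max s t powr q * \<bar>log_term q r c u n\<bar>"
    unfolding log_term_rescale_parts[OF assms(5,6)] \<sigma>_def [symmetric]
    using abs_triangle_ineq[of "r * \<sigma> powr q * ln \<sigma> * (c n * \<bar>u n\<bar> powr q)" "\<sigma> powr q * log_term q r c u n"]
      assms(3)[of n]
    by (simp add: abs_mult)
qed

lemma functional_I_rescale_parts_ineq:
  assumes "1 \<le> p" "p < q" "r \<ge> 0" "s \<ge> 0" "t \<ge> 0"
    and "\<And>n. a n \<ge> 0" "b0 > 0" "\<And>n. b n \<ge> b0" "\<And>n. c n \<ge> 0" "c summable_on UNIV"
    and "u \<in> spaceD p q r a b c"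
  shows "(1 - s powr q) / q * deriv_I p q r a b c u (pos_part u)
           + (1 - t powr q) / q * deriv_I p q r a b c u (neg_part u)
         \<le> functional_I p q r a b c u - functional_I p q r a b c (rescale_parts s t u)"
proof -
  define w where "w = rescale_parts s t u"
  have b: "b n \<ge> 0" for n using assms(7) assms(8)[of n] by simp
  have "u \<in> spaceE p a b" and uL: "log_term q r c u summable_on UNIV"
    using assms(11) by (auto simp: spaceD_def)
  then have uE: "E_term p a b u summable_on UNIV" by (simp add: spaceE_def)
  have uC: "(\<lambda>n. c n * \<bar>u n\<bar> powr q) summable_on UNIV"
    using spaceE_bounded[OF \<open>u \<in> spaceE p a b\<close> _ assms(6,7,8)] assms(1,2)
    by (intro summable_weighted_powr_bounded[OF assms(10,9)]) auto
  have "0 \<le> max s t" using assms by simp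
  have wE: "E_term p a b w summable_on UNIV"
    using summable_E_term_dominated[OF uE _ assms(6) b \<open>0 \<le> max s t\<close>] assms
      abs_fdiff_rescale_parts_le abs_rescale_parts_le by (simp add: w_def)
  have wC: "(\<lambda>n. c n * \<bar>w n\<bar> powr q) summable_on UNIV"
    using summable_weighted_powr_dominated[OF uC assms(9) _ \<open>0 \<le> max s t\<close>] assms
      abs_rescale_parts_le by (simp add: w_def)
  have wL: "log_term q r c w summable_on UNIV"
    using summable_log_term_rescale_parts[OF uL uC assms(9)] assms by (simp add: w_def)
  have "((\<lambda>n. (1 - s powr q) / q * deriv_density p q r a b c u (pos_part u) n
              + (1 - t powr q) / q * deriv_density p q r a b c u (neg_part u) n)
        has_sum ((1 - s powr q) / q * deriv_I p q r a b c u (pos_part u)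
              + (1 - t powr q) / q * deriv_I p q r a b c u (neg_part u))) UNIV"
    using assms(11) assms(6) b
    by (intro has_sum_add has_sum_cmult_right has_sum_deriv_density_part)
       (auto simp: fdiff_def pos_part_def neg_part_def)
  moreover have "((\<lambda>n. energy_density p q r a b c u n - energy_density p q r a b c w n)
        has_sum (functional_I p q r a b c u - functional_I p q r a b c w)) UNIV"
    using assms(1,6) b uE uC uL wE wC wL
    by (intro has_sum_diff has_sum_energy_density) auto
  ultimately show ?thesis
    unfolding w_def
    by (rule has_sum_mono) (use deriv_density_parts_le_energy_density_diff assms b in auto)
qed

theorem corollary2p4:
  fixes p q r :: real and a b c :: "int \<Rightarrow> real"
  assumes "1 < p" and "p < q" and "p / 2 \<in> \<nat>" and "r \<ge> 1"
    and "\<And>n. a n > 0" and "\<And>n. b n > 0" and "\<And>n. c n > 0"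
    and C1: "\<exists>b0 > 0. \<forall>n. b n \<ge> b0"
            "filterlim b at_top at_top" "filterlim b at_top at_bot"
    and C2: "\<exists>c0 > 0. \<forall>n. c n \<le> c0" "c summable_on UNIV"
    and "u \<in> nehari_M p q r a b c"
  shows "functional_I p q r a b c u
           = (GREATEST x. \<exists>s t. s \<ge> 0 \<and> t \<ge> 0 \<and>
                 x = functional_I p q r a b c (\<lambda>n. s * pos_part u n + t * neg_part u n))
      \<and> (\<forall>s t. s \<ge> 0 \<longrightarrow> t \<ge> 0 \<longrightarrow>
             functional_I p q r a b c (\<lambda>n. s * pos_part u n + t * neg_part u n)
               \<le> functional_I p q r a b c u)"
proof -
  obtain b0 where b0: "b0 > 0" "\<And>n. b n \<ge> b0" using C1(1) by blast
  have u: "u \<in> spaceD p q r a b c" "deriv_I p q r a b c u (pos_part u) = 0"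
    "deriv_I p q r a b c u (neg_part u) = 0"
    using assms(13) unfolding nehari_M_def by blast+
  have "r \<ge> 0" "\<And>n. a n \<ge> 0" "\<And>n. c n \<ge> 0" using assms(4,5,7) by (auto intro: less_imp_le)
  have le: "functional_I p q r a b c (\<lambda>n. s * pos_part u n + t * neg_part u n)
              \<le> functional_I p q r a b c u" if "s \<ge> 0" "t \<ge> 0" for s t
    using functional_I_rescale_parts_ineq[OF less_imp_le[OF assms(1)] assms(2) \<open>r \<ge> 0\<close> that \<open>\<And>n. a n \<ge> 0\<close> b0
        \<open>\<And>n. c n \<ge> 0\<close> C2(2) u(1)]
    unfolding u rescale_parts_def [abs_def] by simp
  have parts: "(\<lambda>n. pos_part u n + neg_part u n) = u"
    by (simp add: fun_eq_iff pos_part_plus_neg_part)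
  have greatest: "functional_I p q r a b c u = (GREATEST x. \<exists>s t. s \<ge> 0 \<and> t \<ge> 0 \<and>
                 x = functional_I p q r a b c (\<lambda>n. s * pos_part u n + t * neg_part u n))"
  proof (rule sym, rule Greatest_equality)
    show "\<exists>s t. s \<ge> 0 \<and> t \<ge> 0 \<and>
        functional_I p q r a b c u = functional_I p q r a b c (\<lambda>n. s * pos_part u n + t * neg_part u n)"
      by (rule exI[of _ 1], rule exI[of _ 1]) (simp add: parts)
  qed (use le in blast)
  show ?thesis by (intro conjI allI impI greatest le)
qed

end
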